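(* Let $\{(\mu_t,\nu_t)\}_{t\ge0}$ be a weakly continuous $\rhd_c$-convolution semigroup with $(\mu_0,\nu_0)=(\delta_1,\delta_1)$. Let $B_1,B_2:\mathbb{D}\to\mathbb{C}$ be analytic with $\operatorname{Re}B_1,\operatorname{Re}B_2\le0$ such that, for all $t\ge0$ and $z\in\mathbb{D}$, $$\tfrac{d}{dt}\eta_{\mu_t}(z)=\eta_{\mu_t}(z)B_1(\eta_{\nu_t}(z)),\qquad \tfrac{d}{dt}\eta_{\nu_t}(z)=\eta_{\nu_t}(z)B_2(\eta_{\nu_t}(z)).$$ Write $B_1(z)=\sum_{n\ge1}r_nz^{n-1}$ and $\mathbb{N}=\{1,2,3,\dots\}$. (1) Suppose $B_2\equiv2\pi i\frac{p}{q}$, where $p\ne0$ and $q>0$ are integers with no common prime divisor. Then $$\eta_{\mu_1}(z)=z\exp\Big(r_1+\sum_{n\in\mathbb{N}\setminus q\mathbb{N}}r_{n+1}\frac{e^{2\pi inp/q}-1}{2\pi inp/q}z^n\Big).$$ In particular, if $B_2\equiv2\pi ik$ for a nonzero integer $k$, then $\eta_{\mu_1}(z)=e^{r_1}z$. (2) If $B_2\equiv0$, then $\eta_{\mu_1}(z)=ze^{B_1(z)}$.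
   Context: $\mathbb{T}$ is the unit circle, $\mathbb{D}$ the open unit disc, $\mathcal{P}(\mathbb{T})$ the Borel probability measures on $\mathbb{T}$, and $\delta_1$ the Dirac mass at $1$. For $\mu\in\mathcal{P}(\mathbb{T})$ let $\psi_\mu(z)=\int\frac{z\zeta}{1-z\zeta}d\mu(\zeta)$ and $\eta_\mu=\psi_\mu/(1+\psi_\mu)$ on $\mathbb{D}$; $\eta_\mu$ determines $\mu$. The multiplicative conditionally monotone convolution is $(\mu_1,\nu_1)\rhd_c(\mu_2,\nu_2)=(\mu,\nu)$ with $\eta_\nu=\eta_{\nu_1}\circ\eta_{\nu_2}$ and $\eta_\mu(z)=\eta_{\mu_2}(z)\,h_{\mu_1}(\eta_{\nu_2}(z))$, where $h_{\mu_1}(w)=\eta_{\mu_1}(w)/w$ and $h_{\mu_1}(0)=\eta_{\mu_1}'(0)$. A weakly continuous $\rhd_c$-convolution semigroup is a family $\{(\mu_t,\nu_t)\}_{t\ge0}$ in $\mathcal{P}(\mathbb{T})^2$ with $(\mu_{s+t},\nu_{s+t})=(\mu_s,\nu_s)\rhd_c(\mu_t,\nu_t)$ for all $s,t\ge0$ and $t\mapsto\mu_t,\nu_t$ weakly continuous. *)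

theory Defs
  imports "HOL-Probability.Probability"
begin

text \<open>Borel probability measures on the unit circle T, viewed as Borel
probability measures on the complex plane concentrated on sphere 0 1.\<close>
definition prob_T :: "complex measure \<Rightarrow> bool" where
  "prob_T M \<longleftrightarrow> prob_space M \<and> sets M = sets borel \<and> emeasure M (sphere 0 1) = 1"

definition psi :: "complex measure \<Rightarrow> complex \<Rightarrow> complex" where
  "psi M z = (\<integral>\<zeta>. z * \<zeta> / (1 - z * \<zeta>) \<partial>M)"

definition eta :: "complex measure \<Rightarrow> complex \<Rightarrow> complex" where
  "eta M z = psi M z / (1 + psi M z)"

definition h :: "complex measure \<Rightarrow> complex \<Rightarrow> complex" where
  "h M w = (if w = 0 then deriv (eta M) 0 else eta M w / w)"

definition delta1 :: "complex measure" where
  "delta1 = return borel 1"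

definition weakly_continuous :: "(real \<Rightarrow> complex measure) \<Rightarrow> bool" where
  "weakly_continuous \<mu> \<longleftrightarrow>
     (\<forall>f :: complex \<Rightarrow> real. continuous_on (sphere 0 1) f \<longrightarrow>
        continuous_on {0..} (\<lambda>t. \<integral>x. f x \<partial>(\<mu> t)))"

text \<open>Multiplicative conditionally monotone convolution semigroup:
  (mu_{s+t}, nu_{s+t}) = (mu_s, nu_s) \<rhd>_c (mu_t, nu_t), expressed through eta on D.\<close>
definition cm_semigroup :: "(real \<Rightarrow> complex measure) \<Rightarrow> (real \<Rightarrow> complex measure) \<Rightarrow> bool" where
  "cm_semigroup \<mu> \<nu> \<longleftrightarrow>
     (\<forall>t\<ge>0. prob_T (\<mu> t) \<and> prob_T (\<nu> t)) \<and>
     (\<forall>s\<ge>0. \<forall>t\<ge>0. \<forall>z\<in>ball 0 1.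
        eta (\<nu> (s + t)) z = eta (\<nu> s) (eta (\<nu> t) z) \<and>
        eta (\<mu> (s + t)) z = eta (\<mu> t) z * h (\<mu> s) (eta (\<nu> t) z)) \<and>
     weakly_continuous \<mu> \<and> weakly_continuous \<nu>"

end

theory Submission
  imports Defs
begin

text \<open>Since \<open>B2\<close> is a constant \<open>c\<close>, the equation for \<open>\<nu>\<close> integrates to
  \<open>eta (\<nu> t) z = z exp (c t)\<close>; substituting this orbit into the linear equation for \<open>\<mu>\<close>
  gives \<open>eta (\<mu> 1) z = z exp (\<integral>\<^sub>0\<^sup>1 B1 (z exp (c s)) ds)\<close>. For \<open>c = 2\<pi>ip/q\<close> the orbit stays
  on the circle \<open>|w| = |z|\<close>, where the Taylor series of \<open>B1\<close> converges uniformly, so the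
  integral is computed termwise: \<open>\<integral>\<^sub>0\<^sup>1 exp (c n s) ds = (exp (c n) - 1) / (c n)\<close>, which
  vanishes when \<open>q\<close> divides \<open>n > 0\<close>. Only the two differential equations and the fact that
  \<open>eta\<close> maps the unit disc into itself are used.\<close>

lemma Re_div_one_minus_ge:
  fixes w :: complex
  assumes "norm w < 1"
  shows "Re (w / (1 - w)) \<ge> - norm w / (1 + norm w)"
proof -
  obtain a b where w: "w = Complex a b" by (cases w)
  define \<rho> where "\<rho> = norm w"
  have ab: "a\<^sup>2 + b\<^sup>2 = \<rho>\<^sup>2" using w cmod_power2[of w] by (simp add: \<rho>_def)
  have \<rho>: "0 \<le> \<rho>" "\<rho> < 1" using assms by (auto simp: \<rho>_def)
  have "\<bar>a\<bar> \<le> \<rho>" using ab \<rho>(1) by (metis abs_le_square_iff abs_of_nonneg le_add_same_cancel1 zero_le_power2)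
  then have a: "- \<rho> \<le> a" "a \<le> \<rho>" by auto
  have Re_eq: "Re (w / (1 - w)) = (a - \<rho>\<^sup>2) / (1 - 2 * a + \<rho>\<^sup>2)"
    using w ab by (simp add: Re_divide power2_eq_square algebra_simps)
  have "(1 - \<rho>)\<^sup>2 \<le> 1 - 2 * a + \<rho>\<^sup>2" using a by (simp add: power2_eq_square algebra_simps)
  moreover have "(1 - \<rho>)\<^sup>2 > 0" using \<rho> by simp
  ultimately have den: "1 - 2 * a + \<rho>\<^sup>2 > 0" by linarith
  have "(a + \<rho>) * (1 - \<rho>) \<ge> 0" using a \<rho> by simp
  then have "(a - \<rho>\<^sup>2) * (1 + \<rho>) \<ge> - \<rho> * (1 - 2 * a + \<rho>\<^sup>2)"
    by (simp add: power2_eq_square algebra_simps)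
  then show ?thesis using den \<rho> unfolding Re_eq \<rho>_def[symmetric] by (simp add: divide_simps)
qed

text \<open>On the circle, \<open>Re (z\<zeta>/(1 - z\<zeta>)) > -1/2\<close>, so \<open>Re \<psi> > -1/2\<close>, which is
  exactly \<open>|\<psi>| < |1 + \<psi>|\<close>.\<close>
lemma eta_in_ball:
  assumes M: "prob_T M" and z: "z \<in> ball 0 1"
  shows "eta M z \<in> ball 0 1"
proof -
  interpret prob_space M using M by (simp add: prob_T_def)
  define m where "m = - norm z / (1 + norm z)"
  have "prob (sphere 0 1) = 1" using M by (simp add: prob_T_def measure_def)
  then have "AE \<zeta> in M. \<zeta> \<in> sphere 0 1" by (rule AE_prob_1)
  then have lower: "AE \<zeta> in M. m \<le> Re (z * \<zeta> / (1 - z * \<zeta>))"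
  proof eventually_elim
    case (elim \<zeta>)
    then have "norm (z * \<zeta>) = norm z" by (simp add: norm_mult)
    then show ?case using Re_div_one_minus_ge[of "z * \<zeta>"] z by (simp add: m_def)
  qed
  have "m \<le> 0" by (simp add: m_def)
  have Re_psi: "m \<le> Re (psi M z)"
  proof (cases "integrable M (\<lambda>\<zeta>. z * \<zeta> / (1 - z * \<zeta>))")
    case True
    have "(\<integral>\<zeta>. m \<partial>M) \<le> (\<integral>\<zeta>. Re (z * \<zeta> / (1 - z * \<zeta>)) \<partial>M)"
      using True lower by (intro integral_mono_AE) auto
    then show ?thesis unfolding psi_def using integral_Re[OF True] by (simp add: prob_space)
  next
    case False
    then show ?thesis using \<open>m \<le> 0\<close> by (simp add: not_integrable_integral_eq psi_def)
  qed
  have "m > -1/2" using z norm_ge_zero[of z] by (simp add: m_def divide_simps add_pos_nonneg)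
  with Re_psi have "1 + 2 * Re (psi M z) > 0" by linarith
  then have "(norm (psi M z))\<^sup>2 < (norm (1 + psi M z))\<^sup>2"
    unfolding cmod_power2 by (simp add: power2_eq_square algebra_simps)
  then have "norm (psi M z) < norm (1 + psi M z)" by (simp add: power_less_imp_less_base)
  then show ?thesis by (simp add: eta_def norm_divide divide_less_eq)
qed

lemma eta_delta1:
  assumes "z \<in> ball 0 1"
  shows "eta delta1 z = z"
proof -
  have "(\<lambda>\<zeta>. z * \<zeta> / (1 - z * \<zeta>)) \<in> borel_measurable borel" by measurable
  then have "psi delta1 z = z / (1 - z)" by (simp add: psi_def delta1_def integral_return)
  moreover have "z \<noteq> 1" using assms by auto
  moreover have "z / (1 - z) / (1 + z / (1 - z)) = z" using \<open>z \<noteq> 1\<close> by (simp add: field_simps)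
  ultimately show ?thesis by (simp add: eta_def)
qed

lemma linear_ode_exp_integral:
  fixes F g :: "real \<Rightarrow> complex"
  assumes g: "continuous_on {a..b} g"
    and F: "\<And>s. s \<in> {a..b} \<Longrightarrow> (F has_vector_derivative F s * g s) (at s within {a..b})"
    and t: "t \<in> {a..b}"
  shows "F t = F a * exp (integral {a..t} g)"
proof -
  define G where "G u = integral {a..u} g" for u
  have "((\<lambda>s. F s * exp (- G s)) has_vector_derivative 0) (at s within {a..b})"
    if s: "s \<in> {a..b}" for s
  proof -
    have "(G has_vector_derivative g s) (at s within {a..b})"
      unfolding G_def by (rule integral_has_vector_derivative[OF g s])
    then have "((exp \<circ> (\<lambda>u. - G u)) has_vector_derivative - g s * exp (- G s)) (at s within {a..b})"
      by (intro field_vector_diff_chain_within) (auto intro!: derivative_eq_intros)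
    from has_vector_derivative_mult[OF F[OF s] this] show ?thesis
      by (simp add: o_def algebra_simps)
  qed
  then obtain C where "\<And>s. s \<in> {a..b} \<Longrightarrow> F s * exp (- G s) = C"
    by (rule has_vector_derivative_zero_constant[of "{a..b}", rotated]) auto
  then have "F t * exp (- G t) = F a * exp (- G a)" using t by (metis atLeastAtMost_iff order_trans order_refl)
  then show ?thesis by (simp add: G_def exp_minus field_simps)
qed

lemma cm_semigroup_prob_T:
  assumes "cm_semigroup \<mu> \<nu>" "t \<ge> 0"
  shows "prob_T (\<mu> t)" "prob_T (\<nu> t)"
  using assms by (auto simp: cm_semigroup_def)

lemma eta_flow_const_generator:
  assumes sg: "cm_semigroup \<mu> \<nu>" and init: "\<nu> 0 = delta1"
    and ode: "\<forall>t\<ge>0. \<forall>z\<in>ball 0 1.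
       ((\<lambda>s. eta (\<nu> s) z) has_vector_derivative (eta (\<nu> t) z * B (eta (\<nu> t) z))) (at t within {0..})"
    and B: "\<forall>w\<in>ball 0 1. B w = c"
    and z: "z \<in> ball 0 1" and t: "t \<ge> 0"
  shows "eta (\<nu> t) z = z * exp (c * of_real t)"
proof -
  have "((\<lambda>s. eta (\<nu> s) z) has_vector_derivative eta (\<nu> s) z * c) (at s within {0..t})"
    if s: "s \<in> {0..t}" for s
  proof -
    have "B (eta (\<nu> s) z) = c"
      using B eta_in_ball[OF cm_semigroup_prob_T(2)[OF sg] z] s by auto
    moreover have "((\<lambda>s. eta (\<nu> s) z) has_vector_derivative eta (\<nu> s) z * B (eta (\<nu> s) z))
        (at s within {0..})"
      using ode s z by auto
    ultimately show ?thesis by (auto intro: has_vector_derivative_within_subset)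
  qed
  from linear_ode_exp_integral[of 0 t "\<lambda>_. c", OF _ this] t
  show ?thesis using init eta_delta1[OF z] by (simp add: scaleR_conv_of_real mult.commute)
qed

lemma eta_flow_along_orbit:
  assumes sg: "cm_semigroup \<mu> \<nu>" and init: "\<mu> 0 = delta1" "\<nu> 0 = delta1"
    and hol: "B1 holomorphic_on ball 0 1"
    and ode1: "\<forall>t\<ge>0. \<forall>z\<in>ball 0 1.
       ((\<lambda>s. eta (\<mu> s) z) has_vector_derivative (eta (\<mu> t) z * B1 (eta (\<nu> t) z))) (at t within {0..})"
    and ode2: "\<forall>t\<ge>0. \<forall>z\<in>ball 0 1.
       ((\<lambda>s. eta (\<nu> s) z) has_vector_derivative (eta (\<nu> t) z * B2 (eta (\<nu> t) z))) (at t within {0..})"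
    and B2: "\<forall>w\<in>ball 0 1. B2 w = c"
    and z: "z \<in> ball 0 1" and t: "t \<ge> 0"
  shows "eta (\<mu> t) z = z * exp (integral {0..t} (\<lambda>s. B1 (z * exp (c * of_real s))))"
proof -
  have orbit: "eta (\<nu> s) z = z * exp (c * of_real s)" if "s \<in> {0..t}" for s
    using eta_flow_const_generator[OF sg init(2) ode2 B2 z] that by simp
  have "z * exp (c * of_real s) \<in> ball 0 1" if "s \<in> {0..t}" for s
    using orbit[OF that] eta_in_ball[OF cm_semigroup_prob_T(2)[OF sg] z, of s] that by auto
  then have cont: "continuous_on {0..t} (\<lambda>s. B1 (z * exp (c * of_real s)))"
    by (intro continuous_on_compose2[OF holomorphic_on_imp_continuous_on[OF hol]])
       (auto intro!: continuous_intros)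
  have "((\<lambda>s. eta (\<mu> s) z) has_vector_derivative eta (\<mu> s) z * B1 (z * exp (c * of_real s)))
          (at s within {0..t})" if s: "s \<in> {0..t}" for s
  proof -
    have "((\<lambda>s. eta (\<mu> s) z) has_vector_derivative eta (\<mu> s) z * B1 (eta (\<nu> s) z))
        (at s within {0..})"
      using ode1 s z by auto
    then show ?thesis using orbit[OF s] by (auto intro: has_vector_derivative_within_subset)
  qed
  from linear_ode_exp_integral[OF cont this] t
  show ?thesis using init eta_delta1[OF z] by simp
qed

lemma has_integral_exp_linear:
  fixes k :: complex
  assumes "k \<noteq> 0"
  shows "((\<lambda>s. exp (k * of_real s)) has_integral (exp k - 1) / k) {0..1}"
proof -
  have "((\<lambda>s. exp (k * of_real s) / k) has_vector_derivative exp (k * of_real s)) (at s within {0..1})"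
    for s :: real
  proof -
    have "((\<lambda>w. exp (k * w) / k) has_field_derivative exp (k * of_real s)) (at (of_real s))"
      using assms by (auto intro!: derivative_eq_intros)
    then show ?thesis by (rule has_vector_derivative_real_field)
  qed
  from fundamental_theorem_of_calculus[OF _ this] show ?thesis
    by (simp add: diff_divide_distrib)
qed

lemma sums_integral_powser_comp:
  fixes a :: "nat \<Rightarrow> 'a::{real_normed_div_algebra,banach}" and \<gamma> :: "real \<Rightarrow> 'a"
  assumes \<rho>: "\<rho> < conv_radius a"
    and \<gamma>: "continuous_on {u..v} \<gamma>" "\<gamma> ` {u..v} \<subseteq> cball 0 \<rho>"
  shows "(\<lambda>n. integral {u..v} (\<lambda>s. a n * \<gamma> s ^ n)) sums integral {u..v} (\<lambda>s. \<Sum>n. a n * \<gamma> s ^ n)"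
proof -
  have "uniform_limit (cball 0 \<rho>) (\<lambda>N x. \<Sum>n<N. a n * x ^ n) (\<lambda>x. \<Sum>n. a n * x ^ n) sequentially"
    using powser_uniform_limit[OF \<rho>, of 0] by simp
  then have "uniform_limit {u..v} (\<lambda>N s. \<Sum>n<N. a n * \<gamma> s ^ n) (\<lambda>s. \<Sum>n. a n * \<gamma> s ^ n) sequentially"
    using \<gamma>(2) by (force simp: uniform_limit_iff elim!: eventually_mono)
  moreover have "continuous_on {u..v} (\<lambda>s. \<Sum>n<N. a n * \<gamma> s ^ n)" for N
    using \<gamma>(1) by (auto intro!: continuous_intros)
  ultimately obtain I J where
    I: "\<And>N. ((\<lambda>s. \<Sum>n<N. a n * \<gamma> s ^ n) has_integral I N) {u..v}"
    and J: "((\<lambda>s. \<Sum>n. a n * \<gamma> s ^ n) has_integral J) {u..v}" and "I \<longlonglongrightarrow> J"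
    by (rule uniform_limit_integral) auto
  moreover have "I = (\<lambda>N. \<Sum>n<N. integral {u..v} (\<lambda>s. a n * \<gamma> s ^ n))"
  proof
    fix N
    have "(\<lambda>s. a n * \<gamma> s ^ n) integrable_on {u..v}" for n
      using \<gamma>(1) by (intro integrable_continuous_interval continuous_intros)
    then have "((\<lambda>s. \<Sum>n<N. a n * \<gamma> s ^ n) has_integral (\<Sum>n<N. integral {u..v} (\<lambda>s. a n * \<gamma> s ^ n))) {u..v}"
      by (intro has_integral_sum) auto
    then show "I N = (\<Sum>n<N. integral {u..v} (\<lambda>s. a n * \<gamma> s ^ n))"
      using I has_integral_unique by blast
  qed
  ultimately show ?thesis using J by (simp add: sums_def integral_unique)
qed

lemma conv_radius_ge_1:
  fixes a :: "nat \<Rightarrow> complex"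
  assumes "\<forall>w\<in>ball 0 1. summable (\<lambda>n. a n * w ^ n)"
  shows "conv_radius a \<ge> 1"
proof (rule conv_radius_geI_ex')
  fix r :: real assume "0 < r" "ereal r < 1"
  then show "summable (\<lambda>n. a n * of_real r ^ n)" using assms by auto
qed

lemma integral_rotation_power:
  fixes c z :: complex
  assumes "c \<noteq> 0"
  shows "integral {0..1} (\<lambda>s. (z * exp (c * of_real s)) ^ n) =
           (if n = 0 then 1 else z ^ n * (exp (c * of_nat n) - 1) / (c * of_nat n))"
proof (cases "n = 0")
  case False
  have "(z * exp (c * of_real s)) ^ n = z ^ n * exp (c * of_nat n * of_real s)" for s
    by (simp add: power_mult_distrib exp_of_nat_mult[symmetric] algebra_simps)
  moreover have "c * of_nat n \<noteq> 0" using False assms by simp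
  note integral_unique[OF has_integral_exp_linear[OF this]]
  ultimately show ?thesis using False by simp
qed simp

lemma integral_powser_along_rotation_sums:
  fixes a :: "nat \<Rightarrow> complex"
  assumes f: "\<forall>w\<in>ball 0 1. (\<lambda>n. a n * w ^ n) sums f w"
    and z: "z \<in> ball 0 1" and c: "Re c = 0" "c \<noteq> 0"
  shows "(\<lambda>n. if n = 0 then a 0 else a n * z ^ n * (exp (c * of_nat n) - 1) / (c * of_nat n))
           sums integral {0..1} (\<lambda>s. f (z * exp (c * of_real s)))"
proof -
  define \<gamma> where "\<gamma> s = z * exp (c * of_real s)" for s :: real
  have norm_\<gamma>: "norm (\<gamma> s) = norm z" for s
    using c by (simp add: \<gamma>_def norm_mult)
  have "ereal (norm z) < conv_radius a"
    using z conv_radius_ge_1[of a] f sums_summable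
    by (metis ereal_less(3) less_le_trans less_ereal.simps(1) mem_ball_0)
  moreover have "continuous_on {0..1} \<gamma>" by (auto simp: \<gamma>_def intro!: continuous_intros)
  moreover have "\<gamma> ` {0..1} \<subseteq> cball 0 (norm z)" by (auto simp: norm_\<gamma>)
  ultimately have "(\<lambda>n. integral {0..1} (\<lambda>s. a n * \<gamma> s ^ n)) sums integral {0..1} (\<lambda>s. \<Sum>n. a n * \<gamma> s ^ n)"
    by (rule sums_integral_powser_comp)
  moreover have "(\<Sum>n. a n * \<gamma> s ^ n) = f (\<gamma> s)" for s
    using f z norm_\<gamma>[of s] sums_unique by (metis mem_ball_0)
  moreover have "integral {0..1} (\<lambda>s. a n * \<gamma> s ^ n) =
      (if n = 0 then a 0 else a n * z ^ n * (exp (c * of_nat n) - 1) / (c * of_nat n))" for n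
    using integral_rotation_power[OF c(2), of z n] by (simp add: \<gamma>_def)
  ultimately show ?thesis by (simp add: \<gamma>_def)
qed

lemma exp_2pi_i_rational_multiple_eq_1:
  assumes "q dvd int n" "q \<noteq> 0"
  shows "exp (2 * pi * \<i> * of_nat n * of_int p / of_int q) = 1"
proof -
  obtain m where "int n = q * m" using assms(1) by (auto simp: dvd_def)
  then have "(of_nat n :: complex) = of_int q * of_int m" by (metis of_int_mult of_int_of_nat_eq)
  then have "2 * pi * \<i> * of_nat n * of_int p / of_int q = 2 * of_int (p * m) * pi * \<i>"
    using assms(2) by (simp add: field_simps)
  then show ?thesis using exp_integer_2pi[of "of_int (p * m)"] by simp
qed

lemma eta_mu_1_rational_rotation:
  fixes p q :: int
  assumes sg: "cm_semigroup \<mu> \<nu>" and init: "\<mu> 0 = delta1" "\<nu> 0 = delta1"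
    and hol: "B1 holomorphic_on ball 0 1"
    and ode1: "\<forall>t\<ge>0. \<forall>z\<in>ball 0 1.
       ((\<lambda>s. eta (\<mu> s) z) has_vector_derivative (eta (\<mu> t) z * B1 (eta (\<nu> t) z))) (at t within {0..})"
    and ode2: "\<forall>t\<ge>0. \<forall>z\<in>ball 0 1.
       ((\<lambda>s. eta (\<nu> s) z) has_vector_derivative (eta (\<nu> t) z * B2 (eta (\<nu> t) z))) (at t within {0..})"
    and coeffs: "\<forall>z\<in>ball 0 1. (\<lambda>n. r (n + 1) * z ^ n) sums B1 z"
    and pq: "p \<noteq> 0" "q > 0"
    and B2: "\<forall>w\<in>ball 0 1. B2 w = 2 * pi * \<i> * of_int p / of_int q"
    and z: "z \<in> ball 0 1"
  defines "a \<equiv> \<lambda>n::nat. if n = 0 \<or> q dvd int n then 0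
                     else r (n + 1) * (exp (2 * pi * \<i> * of_nat n * of_int p / of_int q) - 1)
                          / (2 * pi * \<i> * of_nat n * of_int p / of_int q) * z ^ n"
  shows "summable a" and "eta (\<mu> 1) z = z * exp (r 1 + suminf a)"
proof -
  define c where "c = 2 * pi * \<i> * of_int p / of_int q"
  define S where "S = integral {0..1} (\<lambda>s. B1 (z * exp (c * of_real s)))"
  define b where "b n = (if n = 0 then r 1 else r (n + 1) * z ^ n * (exp (c * of_nat n) - 1) / (c * of_nat n))" for n
  have c: "Re c = 0" "c \<noteq> 0" using pq by (auto simp: c_def)
  have "b sums S"
    using integral_powser_along_rotation_sums[OF coeffs z c] by (simp add: b_def[abs_def] S_def cong: if_cong)
  moreover have "a n = (if n = 0 then 0 else b n)" for n
    using exp_2pi_i_rational_multiple_eq_1[of q n p] pq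
    by (auto simp: a_def b_def c_def field_simps)
  ultimately have a: "a sums (S - r 1)"
    using sums_Suc_iff[of a] sums_Suc_iff[of b] by (simp add: b_def)
  then show "summable a" by (rule sums_summable)
  have "eta (\<mu> 1) z = z * exp S"
    using eta_flow_along_orbit[OF sg init hol ode1 ode2 B2[folded c_def] z, of 1] by (simp add: S_def)
  then show "eta (\<mu> 1) z = z * exp (r 1 + suminf a)" using sums_unique[OF a] by (simp add: algebra_simps)
qed

theorem proposition5p7:
  fixes \<mu> \<nu> :: "real \<Rightarrow> complex measure"
    and B1 B2 :: "complex \<Rightarrow> complex"
    and r :: "nat \<Rightarrow> complex"
  assumes sg: "cm_semigroup \<mu> \<nu>"
    and init: "\<mu> 0 = delta1" "\<nu> 0 = delta1"
    and hol: "B1 holomorphic_on ball 0 1" "B2 holomorphic_on ball 0 1"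
    and re: "\<forall>z\<in>ball 0 1. Re (B1 z) \<le> 0" "\<forall>z\<in>ball 0 1. Re (B2 z) \<le> 0"
    and ode1: "\<forall>t\<ge>0. \<forall>z\<in>ball 0 1.
       ((\<lambda>s. eta (\<mu> s) z) has_vector_derivative (eta (\<mu> t) z * B1 (eta (\<nu> t) z))) (at t within {0..})"
    and ode2: "\<forall>t\<ge>0. \<forall>z\<in>ball 0 1.
       ((\<lambda>s. eta (\<nu> s) z) has_vector_derivative (eta (\<nu> t) z * B2 (eta (\<nu> t) z))) (at t within {0..})"
    and coeffs: "\<forall>z\<in>ball 0 1. (\<lambda>n. r (n + 1) * z ^ n) sums B1 z"
  shows
    "(\<forall>p q :: int. p \<noteq> 0 \<longrightarrow> q > 0 \<longrightarrow> coprime p q \<longrightarrow>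
        (\<forall>z\<in>ball 0 1. B2 z = 2 * pi * \<i> * of_int p / of_int q) \<longrightarrow>
        (\<forall>z\<in>ball 0 1.
           let a = (\<lambda>n::nat. if n = 0 \<or> q dvd int n then 0
                     else r (n + 1) * (exp (2 * pi * \<i> * of_nat n * of_int p / of_int q) - 1)
                          / (2 * pi * \<i> * of_nat n * of_int p / of_int q) * z ^ n)
           in summable a \<and> eta (\<mu> 1) z = z * exp (r 1 + suminf a)))
     \<and> (\<forall>k :: int. k \<noteq> 0 \<longrightarrow> (\<forall>z\<in>ball 0 1. B2 z = 2 * pi * \<i> * of_int k) \<longrightarrow>
        (\<forall>z\<in>ball 0 1. eta (\<mu> 1) z = exp (r 1) * z))
     \<and> ((\<forall>z\<in>ball 0 1. B2 z = 0) \<longrightarrow>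
        (\<forall>z\<in>ball 0 1. eta (\<mu> 1) z = z * exp (B1 z)))"
  (is "?rational \<and> ?integer \<and> ?zero")
proof -
  have rational: ?rational
    using eta_mu_1_rational_rotation[OF sg init hol(1) ode1 ode2 coeffs] by (auto simp: Let_def)
  have ?integer
  proof (intro allI impI ballI)
    fix k :: int and z :: complex
    assume "k \<noteq> 0" "\<forall>z\<in>ball 0 1. B2 z = 2 * pi * \<i> * of_int k" "z \<in> ball 0 1"
    with rational[rule_format, of k 1 z] show "eta (\<mu> 1) z = exp (r 1) * z"
      by (simp add: Let_def)
  qed
  moreover have ?zero
    using eta_flow_along_orbit[OF sg init hol(1) ode1 ode2, of 0 _ 1] by simp
  ultimately show ?thesis using rational by blast
qed

end
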